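(* Let $0<c<1$, let $n,d$ be such that $\delta=(3c)^{1/3}\left(\frac{\log d}{\log \frac{n}{d^2}}\right)^{1/4}$ satisfies $\delta<1/16$, and let $G$ be a $d$-regular graph on $n$ nodes. If $K$ is a pseudo-clique of $G$, then \[|K| \leq \frac{1 - 8\delta}{1- 13\delta} (d+1).\]
   Context: A dense spot of $G$ is a subgraph $H\subseteq G$ with $|H|\le d+1$ nodes such that every node $x\in H$ has $\deg_H(x)\ge(1-4\delta)d$. A pseudo-clique is a subgraph $K=\bigcup_{H\in\mathcal{H}}H$ where $\mathcal{H}$ is a maximal family of pairwise intersecting (sharing at least one node) dense spots. $|K|$ is the number of nodes of $K$. *)

theory Defs
  imports Complex_Main
begin

definition simple_graph :: "'a set \<Rightarrow> ('a \<Rightarrow> 'a \<Rightarrow> bool) \<Rightarrow> bool" where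
  "simple_graph V E \<longleftrightarrow> finite V \<and> (\<forall>x y. E x y \<longrightarrow> x \<in> V \<and> y \<in> V)
     \<and> (\<forall>x y. E x y \<longrightarrow> E y x) \<and> (\<forall>x. \<not> E x x)"

definition regular :: "'a set \<Rightarrow> ('a \<Rightarrow> 'a \<Rightarrow> bool) \<Rightarrow> nat \<Rightarrow> bool" where
  "regular V E d \<longleftrightarrow> (\<forall>x\<in>V. card {y\<in>V. E x y} = d)"

definition deg_in :: "('a \<Rightarrow> 'a \<Rightarrow> bool) \<Rightarrow> 'a set \<Rightarrow> 'a \<Rightarrow> nat" where
  "deg_in E H x = card {y\<in>H. E x y}"

definition dense_spot :: "'a set \<Rightarrow> ('a \<Rightarrow> 'a \<Rightarrow> bool) \<Rightarrow> nat \<Rightarrow> real \<Rightarrow> 'a set \<Rightarrow> bool" where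
  "dense_spot V E d \<delta> H \<longleftrightarrow> H \<subseteq> V \<and> card H \<le> d + 1
     \<and> (\<forall>x\<in>H. real (deg_in E H x) \<ge> (1 - 4 * \<delta>) * real d)"

definition pairwise_intersecting :: "'a set set \<Rightarrow> bool" where
  "pairwise_intersecting \<H> \<longleftrightarrow> (\<forall>H1\<in>\<H>. \<forall>H2\<in>\<H>. H1 \<noteq> H2 \<longrightarrow> H1 \<inter> H2 \<noteq> {})"

definition maximal_intersecting_family ::
  "'a set \<Rightarrow> ('a \<Rightarrow> 'a \<Rightarrow> bool) \<Rightarrow> nat \<Rightarrow> real \<Rightarrow> 'a set set \<Rightarrow> bool" where
  "maximal_intersecting_family V E d \<delta> \<H> \<longleftrightarrow>
     (\<forall>H\<in>\<H>. dense_spot V E d \<delta> H) \<and> pairwise_intersecting \<H>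
     \<and> (\<forall>\<H>'. \<H> \<subset> \<H>' \<and> (\<forall>H\<in>\<H>'. dense_spot V E d \<delta> H) \<longrightarrow> \<not> pairwise_intersecting \<H>')"

definition pseudo_clique ::
  "'a set \<Rightarrow> ('a \<Rightarrow> 'a \<Rightarrow> bool) \<Rightarrow> nat \<Rightarrow> real \<Rightarrow> 'a set \<Rightarrow> bool" where
  "pseudo_clique V E d \<delta> K \<longleftrightarrow>
     (\<exists>\<H>. maximal_intersecting_family V E d \<delta> \<H> \<and> K = \<Union>\<H>)"

end

theory Submission
  imports Defs
begin

text \<open>Fix a dense spot \<open>H\<^sub>0\<close> of the family. Two dense spots sharing a vertex \<open>x\<close> both contain
  almost all of the \<open>d\<close> neighbours of \<open>x\<close>, so they overlap in at least \<open>(1 - 8\<delta>)d + 1\<close> vertices.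
  Hence every vertex \<open>y \<in> K - H\<^sub>0\<close>, lying in a dense spot that meets \<open>H\<^sub>0\<close>, has more than
  \<open>(1 - 12\<delta>)d\<close> neighbours in \<open>H\<^sub>0\<close>, whereas every vertex of \<open>H\<^sub>0\<close> has at most \<open>4\<delta>d\<close> neighbours
  outside \<open>H\<^sub>0\<close>. Counting the edges between \<open>K - H\<^sub>0\<close> and \<open>H\<^sub>0\<close> from both sides bounds
  \<open>|K - H\<^sub>0|\<close> by \<open>4\<delta>(d + 1)/(1 - 12\<delta>)\<close>, and \<open>|H\<^sub>0| \<le> d + 1\<close>.\<close>

lemma real_card_filter_eq_sum:
  "finite A \<Longrightarrow> real (card {x\<in>A. P x}) = (\<Sum>x\<in>A. if P x then 1 else 0)"
  by (simp add: sum.If_cases Int_def conj_commute)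

lemma card_mult_le_by_double_counting:
  fixes l u :: real
  assumes "finite A" "finite B"
    and "\<And>a. a \<in> A \<Longrightarrow> l \<le> real (card {b\<in>B. R a b})"
    and "\<And>b. b \<in> B \<Longrightarrow> real (card {a\<in>A. R a b}) \<le> u"
  shows "real (card A) * l \<le> real (card B) * u"
proof -
  have "real (card A) * l \<le> (\<Sum>a\<in>A. real (card {b\<in>B. R a b}))"
    using sum_mono[of A "\<lambda>_. l"] assms(3) by (simp add: mult.commute)
  also have "\<dots> = (\<Sum>a\<in>A. \<Sum>b\<in>B. if R a b then 1 else 0)"
    using assms(2) by (simp add: real_card_filter_eq_sum)
  also have "\<dots> = (\<Sum>b\<in>B. \<Sum>a\<in>A. if R a b then 1 else 0)"
    by (rule sum.swap)
  also have "\<dots> = (\<Sum>b\<in>B. real (card {a\<in>A. R a b}))"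
    using assms(1) by (simp add: real_card_filter_eq_sum)
  also have "\<dots> \<le> real (card B) * u"
    using sum_mono[of B _ "\<lambda>_. u"] assms(4) by (simp add: mult.commute)
  finally show ?thesis .
qed

lemma dense_spot_finite:
  assumes "simple_graph V E" "dense_spot V E d \<delta> H"
  shows "finite H"
  using assms finite_subset by (auto simp: simple_graph_def dense_spot_def)

lemma dense_spot_card_outer_neighbours_le:
  assumes sg: "simple_graph V E" and reg: "regular V E d"
    and H: "dense_spot V E d \<delta> H" and x: "x \<in> H"
  shows "real (card {y\<in>V - H. E x y}) \<le> 4 * \<delta> * d"
proof -
  have HV: "H \<subseteq> V" and inner: "(1 - 4 * \<delta>) * d \<le> real (card {y\<in>H. E x y})"
    using H x by (auto simp: dense_spot_def deg_in_def)
  have "finite V"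
    using sg by (simp add: simple_graph_def)
  have "d = card {y\<in>V. E x y}"
    using reg x HV by (auto simp: regular_def)
  also have "{y\<in>V. E x y} = {y\<in>H. E x y} \<union> {y\<in>V - H. E x y}"
    using HV by auto
  also have "card \<dots> = card {y\<in>H. E x y} + card {y\<in>V - H. E x y}"
    using \<open>finite V\<close> HV by (intro card_Un_disjoint) (auto intro: finite_subset)
  finally have "card {y\<in>H. E x y} + card {y\<in>V - H. E x y} = d" ..
  then show ?thesis
    using inner by (simp add: algebra_simps flip: of_nat_add)
qed

lemma dense_spots_card_Int_ge:
  assumes sg: "simple_graph V E" and reg: "regular V E d"
    and H: "dense_spot V E d \<delta> H" and H': "dense_spot V E d \<delta> H'"
    and x: "x \<in> H" "x \<in> H'"
  shows "(1 - 8 * \<delta>) * d + 1 \<le> real (card (H \<inter> H'))"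
proof -
  define N where "N = {y\<in>H. E x y}"
  define N' where "N' = {y\<in>H'. E x y}"
  have fin: "finite N" "finite N'"
    using dense_spot_finite[OF sg H] dense_spot_finite[OF sg H'] by (auto simp: N_def N'_def)
  have "card (N \<union> N') \<le> card {y\<in>V. E x y}"
    using H H' sg by (intro card_mono) (auto simp: N_def N'_def dense_spot_def simple_graph_def)
  also have "\<dots> = d"
    using reg x H by (auto simp: regular_def dense_spot_def)
  finally have "card (N \<union> N') \<le> d" .
  moreover have "(1 - 4 * \<delta>) * d \<le> real (card N)" "(1 - 4 * \<delta>) * d \<le> real (card N')"
    using H H' x by (auto simp: N_def N'_def dense_spot_def deg_in_def)
  moreover have "card (N \<union> N') + card (N \<inter> N') = card N + card N'"
    using card_Un_Int[OF fin] by simp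
  ultimately have common: "(1 - 8 * \<delta>) * d \<le> real (card (N \<inter> N'))"
    by (simp add: algebra_simps flip: of_nat_add)
  have "x \<notin> N \<inter> N'"
    using sg by (auto simp: N_def simple_graph_def)
  moreover have "insert x (N \<inter> N') \<subseteq> H \<inter> H'"
    using x by (auto simp: N_def N'_def)
  ultimately have "card (N \<inter> N') + 1 \<le> card (H \<inter> H')"
    using card_mono[OF _ \<open>insert x (N \<inter> N') \<subseteq> H \<inter> H'\<close>] fin dense_spot_finite[OF sg H] by simp
  with common show ?thesis
    by linarith
qed

lemma dense_spot_card_neighbours_ge:
  assumes sg: "simple_graph V E" and reg: "regular V E d"
    and H: "dense_spot V E d \<delta> H" and H': "dense_spot V E d \<delta> H'"
    and x: "x \<in> H" "x \<in> H'" and y: "y \<in> H" "y \<notin> H'"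
  shows "(1 - 12 * \<delta>) * d + 1 \<le> real (card {z\<in>H'. E y z})"
proof -
  have finH: "finite H"
    using dense_spot_finite[OF sg H] .
  have "card H = card (H \<inter> H') + card (H - H')"
    using finH by (rule card_Int_Diff)
  then have outside: "real (card (H - H')) \<le> 8 * \<delta> * d"
    using dense_spots_card_Int_ge[OF sg reg H H' x] H by (simp add: dense_spot_def algebra_simps)
  have "{z\<in>H. E y z} \<subseteq> {z\<in>H'. E y z} \<union> (H - H' - {y})"
    using sg by (auto simp: simple_graph_def)
  then have "card {z\<in>H. E y z} \<le> card ({z\<in>H'. E y z} \<union> (H - H' - {y}))"
    using finH dense_spot_finite[OF sg H'] by (intro card_mono) auto
  also have "\<dots> \<le> card {z\<in>H'. E y z} + card (H - H' - {y})"
    by (rule card_Un_le)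
  also have "card (H - H' - {y}) = card (H - H') - 1"
    using y finH by simp
  finally have "card {z\<in>H. E y z} + 1 \<le> card {z\<in>H'. E y z} + card (H - H')"
    using y finH card_gt_0_iff[of "H - H'"] by fastforce
  moreover have "(1 - 4 * \<delta>) * d \<le> real (card {z\<in>H. E y z})"
    using H y by (auto simp: dense_spot_def deg_in_def)
  ultimately show ?thesis
    using outside by (simp add: algebra_simps flip: of_nat_add)
qed

lemma intersecting_dense_spots_card_Diff_le:
  assumes sg: "simple_graph V E" and reg: "regular V E d"
    and \<delta>: "0 \<le> \<delta>" "\<delta> < 1/12"
    and spots: "\<And>H. H \<in> \<H> \<Longrightarrow> dense_spot V E d \<delta> H"
    and "pairwise_intersecting \<H>" and "H\<^sub>0 \<in> \<H>"
  shows "real (card (\<Union>\<H> - H\<^sub>0)) \<le> 4 * \<delta> * (real d + 1) / (1 - 12 * \<delta>)"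
proof -
  have H\<^sub>0: "dense_spot V E d \<delta> H\<^sub>0"
    using \<open>H\<^sub>0 \<in> \<H>\<close> by (rule spots)
  define M where "M = \<Union>\<H> - H\<^sub>0"
  define a where "a = (1 - 12 * \<delta>) * d + 1"
  have "finite V"
    using sg by (simp add: simple_graph_def)
  moreover have "M \<subseteq> V"
    using spots by (auto simp: M_def dense_spot_def)
  ultimately have finM: "finite M"
    by (rule finite_subset[rotated])
  have into: "a \<le> real (card {z\<in>H\<^sub>0. E y z})" if "y \<in> M" for y
  proof -
    obtain H where H: "H \<in> \<H>" "y \<in> H" "y \<notin> H\<^sub>0"
      using \<open>y \<in> M\<close> by (auto simp: M_def)
    then obtain x where "x \<in> H" "x \<in> H\<^sub>0"
      using \<open>pairwise_intersecting \<H>\<close> \<open>H\<^sub>0 \<in> \<H>\<close> by (auto simp: pairwise_intersecting_def)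
    then show ?thesis
      using dense_spot_card_neighbours_ge[OF sg reg spots[OF H(1)] H\<^sub>0] H by (simp add: a_def)
  qed
  have out: "real (card {y\<in>M. E y z}) \<le> 4 * \<delta> * d" if "z \<in> H\<^sub>0" for z
  proof -
    have "{y\<in>M. E y z} \<subseteq> {y\<in>V - H\<^sub>0. E z y}"
      using sg by (auto simp: M_def simple_graph_def)
    then have "card {y\<in>M. E y z} \<le> card {y\<in>V - H\<^sub>0. E z y}"
      using \<open>finite V\<close> by (intro card_mono) auto
    then show ?thesis
      using dense_spot_card_outer_neighbours_le[OF sg reg H\<^sub>0 that] by linarith
  qed
  have "real (card M) * a \<le> real (card H\<^sub>0) * (4 * \<delta> * d)"
    using finM dense_spot_finite[OF sg H\<^sub>0] into out by (rule card_mult_le_by_double_counting)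
  also have "\<dots> \<le> (real d + 1) * (4 * \<delta> * d)"
    using H\<^sub>0 \<delta> by (intro mult_right_mono) (auto simp: dense_spot_def)
  also have "\<dots> \<le> 4 * \<delta> * (real d + 1) / (1 - 12 * \<delta>) * a"
  proof -
    have "real d \<le> a / (1 - 12 * \<delta>)"
      using \<delta> by (simp add: a_def field_simps)
    then have "(real d + 1) * (4 * \<delta> * d) \<le> (real d + 1) * (4 * \<delta> * (a / (1 - 12 * \<delta>)))"
      using \<delta> by (intro mult_left_mono) auto
    then show ?thesis
      by (simp add: field_simps)
  qed
  finally have "real (card M) * a \<le> 4 * \<delta> * (real d + 1) / (1 - 12 * \<delta>) * a" .
  moreover have "0 < a"
    unfolding a_def using \<delta> by (intro add_nonneg_pos) auto
  ultimately show ?thesis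
    unfolding M_def by (rule mult_right_le_imp_le)
qed

lemma pseudo_clique_card_le:
  assumes sg: "simple_graph V E" and reg: "regular V E d"
    and \<delta>: "0 \<le> \<delta>" "\<delta> < 1/13"
    and K: "pseudo_clique V E d \<delta> K"
  shows "real (card K) \<le> (1 - 8 * \<delta>) / (1 - 13 * \<delta>) * (real d + 1)"
proof -
  obtain \<H> where \<H>: "maximal_intersecting_family V E d \<delta> \<H>" and K_eq: "K = \<Union>\<H>"
    using K by (auto simp: pseudo_clique_def)
  have spots: "\<And>H. H \<in> \<H> \<Longrightarrow> dense_spot V E d \<delta> H" and "pairwise_intersecting \<H>"
    using \<H> by (auto simp: maximal_intersecting_family_def)
  show ?thesis
  proof (cases "\<H> = {}")
    case True
    with K_eq \<delta> show ?thesis by simp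
  next
    case False
    then obtain H\<^sub>0 where "H\<^sub>0 \<in> \<H>" by blast
    then have H\<^sub>0: "dense_spot V E d \<delta> H\<^sub>0" by (rule spots)
    have "real (card (K - H\<^sub>0)) \<le> 4 * \<delta> * (real d + 1) / (1 - 12 * \<delta>)"
      unfolding K_eq using intersecting_dense_spots_card_Diff_le[OF sg reg _ _ spots]
        \<open>pairwise_intersecting \<H>\<close> \<open>H\<^sub>0 \<in> \<H>\<close> \<delta> by simp
    also have "\<dots> \<le> 5 * \<delta> * (real d + 1) / (1 - 13 * \<delta>)"
    proof -
      have "\<delta> * (real d + 1) * (4 * (1 - 13 * \<delta>)) \<le> \<delta> * (real d + 1) * (5 * (1 - 12 * \<delta>))"
        using \<delta> by (intro mult_left_mono) auto
      then show ?thesis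
        using \<delta> by (simp add: divide_simps algebra_simps)
    qed
    moreover have "card K = card H\<^sub>0 + card (K - H\<^sub>0)"
    proof -
      have "K \<subseteq> V" "finite V"
        using K_eq spots sg by (auto simp: dense_spot_def simple_graph_def)
      moreover have "K \<inter> H\<^sub>0 = H\<^sub>0"
        using K_eq \<open>H\<^sub>0 \<in> \<H>\<close> by auto
      ultimately show ?thesis
        using card_Int_Diff[of K H\<^sub>0] finite_subset by metis
    qed
    ultimately have "real (card K) \<le> (real d + 1) + 5 * \<delta> * (real d + 1) / (1 - 13 * \<delta>)"
      using H\<^sub>0 by (simp add: dense_spot_def)
    also have "\<dots> = (1 - 8 * \<delta>) / (1 - 13 * \<delta>) * (real d + 1)"
      using \<delta> by (simp add: field_simps)
    finally show ?thesis .
  qed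
qed

theorem lemma6:
  fixes V :: "'a set" and E :: "'a \<Rightarrow> 'a \<Rightarrow> bool" and n d :: nat and c \<delta> :: real
    and K :: "'a set"
  assumes "0 < c" "c < 1"
    and "d \<ge> 1" "real n > real d ^ 2"
    and "\<delta> = (3 * c) powr (1/3) * (ln (real d) / ln (real n / real d ^ 2)) powr (1/4)"
    and "\<delta> < 1/16"
    and "simple_graph V E" "card V = n" "regular V E d"
    and "pseudo_clique V E d \<delta> K"
  shows "real (card K) \<le> (1 - 8 * \<delta>) / (1 - 13 * \<delta>) * (real d + 1)"
proof (rule pseudo_clique_card_le)
  \<comment> \<open>The formula for \<open>\<delta>\<close> in terms of \<open>c\<close>, \<open>n\<close>, \<open>d\<close> only serves to make \<open>\<delta>\<close> nonnegative.\<close>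
  show "0 \<le> \<delta>"
    using assms(5) by simp
  show "\<delta> < 1/13"
    using assms(6) by simp
qed (use assms in auto)

end
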